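(* Let $f$ satisfy the standing assumptions below and for $\xi,u_1\in(0,1)$ define $$F_0(\xi,u_1)=\frac{1}{2\sqrt2}\int_{-1}^{1}\frac{f'\!\left(\frac{1+\mu}{2}\xi+\frac{1-\mu}{2}u_1\right)}{\sqrt{1-\mu}}\,d\mu .$$ Then: (1) for each $u_1\in(0,1)$, $\lim_{\xi\to0}F_0(\xi,u_1)=\lim_{\xi\to1}F_0(\xi,u_1)=-\infty$; (2) there exists $\delta>0$ such that $\frac{\partial^2}{\partial\xi^2}F_0(\xi,u_1)<0$ for all $0<\xi<1$ and $1-\delta<u_1<1$; (3) $\displaystyle\lim_{u_1\to1}\frac{\partial_\xi F_0(\xi,u_1)}{F_0(\xi,u_1)}=\frac{1}{1-\xi}$ uniformly for $\xi$ in every compact subset of $(0,1)$.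
   Context: Standing assumptions: $f:(0,1)\to\mathbb{R}$ is the inverse of a smooth strictly decreasing function $u_0:\mathbb{R}\to(0,1)$ with $u_0(-\infty)=1$, $u_0(+\infty)=0$; thus $f$ is smooth with $f'<0$, $\lim_{u\to0}f(u)=+\infty$, $\lim_{u\to1}f(u)=-\infty$; moreover $f'''(u)<0$ for $u$ in a neighborhood of $0$ and in a neighborhood of $1$. *)

theory Defs
  imports "HOL-Analysis.Analysis"
begin

definition smooth_on :: "real set \<Rightarrow> (real \<Rightarrow> real) \<Rightarrow> bool" where
  "smooth_on S g \<longleftrightarrow> (\<forall>k. \<forall>x\<in>S. ((deriv ^^ k) g) differentiable (at x))"

definition F0 :: "(real \<Rightarrow> real) \<Rightarrow> real \<Rightarrow> real \<Rightarrow> real" where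
  "F0 f \<xi> u\<^sub>1 = (1 / (2 * sqrt 2)) *
     integral {-1..1} (\<lambda>\<mu>. deriv f ((1 + \<mu>) / 2 * \<xi> + (1 - \<mu>) / 2 * u\<^sub>1) / sqrt (1 - \<mu>))"

end

(*
  The substitution (1 - mu) / 2 = s^2 turns F0 into J0 x u, the integral over [0, 1] of
  f'(x + s^2 (u - x)); differentiating under the integral sign gives the x-derivatives
  J1 and J2, with weights 1 - s^2 and (1 - s^2)^2 in front of f'' and f'''.

  (1) Since f' < 0, inserting the weight s gives J0 <= S0, and S0 is an exact derivative
  along the path: S0 = (f u - f x) / (2 (u - x)), which tends to -infinity at both ends.

  (2) Choose a with f''' < 0 on (a, 1). If x > a the integrand of J2 is negative. Otherwise
  the part of the path below a contributes a bounded amount, while the part above a is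
  bounded by the Taylor remainder of f of order two at a, evaluated at u, which tends to
  -infinity as u -> 1.

  (3) The weight 1 - s only matters for s close to 1, where the path is close to u and
  f', f'' < 0. Hence J0 ~ S0 and J1 ~ S1 uniformly for x in a compact set, and the closed
  form S1 = (2 S0 - f' x) / (2 (u - x)) gives J1 / J0 ~ 1 / (u - x) -> 1 / (1 - x).
*)
theory Submission
  imports Defs
begin

section \<open>The substitution \<open>s\<^sup>2 = (1 - \<mu>) / 2\<close>\<close>

definition sq_interp :: "real \<Rightarrow> real \<Rightarrow> real \<Rightarrow> real" where
  "sq_interp x u s = x + s\<^sup>2 * (u - x)"

definition sq_interp_integral ::
    "(real \<Rightarrow> real) \<Rightarrow> (real \<Rightarrow> real) \<Rightarrow> real \<Rightarrow> real \<Rightarrow> real" where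
  "sq_interp_integral p g x u = integral {0..1} (\<lambda>s. p s * g (sq_interp x u s))"

lemma sq_interp_0 [simp]: "sq_interp x u 0 = x"
  and sq_interp_1 [simp]: "sq_interp x u 1 = u"
  by (simp_all add: sq_interp_def)

lemma sq_interp_eq_convex: "sq_interp x u s = (1 - s\<^sup>2) * x + s\<^sup>2 * u"
  by (simp add: sq_interp_def algebra_simps)

lemma sq_interp_between:
  assumes "0 \<le> s" "s \<le> 1"
  shows "min x u \<le> sq_interp x u s" "sq_interp x u s \<le> max x u"
proof -
  have s2: "0 \<le> s\<^sup>2" "s\<^sup>2 \<le> 1"
    using assms by (auto simp: power_le_one)
  have "(1 - s\<^sup>2) * min x u \<le> (1 - s\<^sup>2) * x" "s\<^sup>2 * min x u \<le> s\<^sup>2 * u"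
    "(1 - s\<^sup>2) * x \<le> (1 - s\<^sup>2) * max x u" "s\<^sup>2 * u \<le> s\<^sup>2 * max x u"
    using s2 by (auto intro!: mult_left_mono)
  then show "min x u \<le> sq_interp x u s" "sq_interp x u s \<le> max x u"
    unfolding sq_interp_eq_convex by (simp_all add: algebra_simps)
qed

lemma sq_interp_strictly_between:
  assumes "0 < s" "s < 1" "x \<noteq> u"
  shows "sq_interp x u s \<in> {min x u<..<max x u}"
proof -
  have s2: "0 < s\<^sup>2" "s\<^sup>2 < 1"
    using assms by (simp_all add: abs_square_less_1)
  have d: "sq_interp x u s - x = s\<^sup>2 * (u - x)" "u - sq_interp x u s = (1 - s\<^sup>2) * (u - x)"
    by (simp_all add: sq_interp_def algebra_simps)
  show ?thesis
  proof (cases "x < u")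
    case True
    then have "0 < s\<^sup>2 * (u - x)" "0 < (1 - s\<^sup>2) * (u - x)"
      using s2 by simp_all
    then have "0 < sq_interp x u s - x" "0 < u - sq_interp x u s"
      unfolding d .
    then show ?thesis using True by simp
  next
    case False
    then have "s\<^sup>2 * (u - x) < 0" "(1 - s\<^sup>2) * (u - x) < 0"
      using s2 assms(3) by (simp_all add: mult_pos_neg)
    then have "sq_interp x u s - x < 0" "u - sq_interp x u s < 0"
      unfolding d .
    then show ?thesis using False by simp
  qed
qed

lemma sq_interp_image: "sq_interp x u ` {0..1} \<subseteq> {min x u..max x u}"
  using sq_interp_between by auto

lemma sq_interp_in_open_interval:
  assumes "a < x" "x < b" "a < u" "u < b" "0 \<le> s" "s \<le> 1"
  shows "sq_interp x u s \<in> {a<..<b}"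
  using sq_interp_between[OF assms(5,6), of x u] assms(1-4) by auto

lemma has_real_derivative_sq_interp:
  "((sq_interp x u) has_real_derivative 2 * s * (u - x)) (at s within S)"
  unfolding sq_interp_def by (auto intro!: derivative_eq_intros)

lemma has_real_derivative_sq_interp_start:
  "((\<lambda>x. sq_interp x u s) has_real_derivative 1 - s\<^sup>2) (at x within S)"
  unfolding sq_interp_def by (auto intro!: derivative_eq_intros)

lemma continuous_on_sq_interp: "continuous_on S (sq_interp x u)"
  unfolding sq_interp_def by (intro continuous_intros)

lemma continuous_on_comp_sq_interp:
  assumes "continuous_on {min x u..max x u} g"
  shows "continuous_on {0..1} (\<lambda>s. g (sq_interp x u s))"
  using continuous_on_compose2[OF assms continuous_on_sq_interp sq_interp_image] .

lemma has_integral_sq_interp_integral: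
  assumes "continuous_on {0..1} p" "continuous_on {min x u..max x u} g"
  shows "((\<lambda>s. p s * g (sq_interp x u s)) has_integral sq_interp_integral p g x u) {0..1}"
  unfolding sq_interp_integral_def
  by (intro integrable_integral integrable_continuous_real continuous_intros assms
      continuous_on_comp_sq_interp)

lemma has_integral_sq_interp_substitution:
  assumes "continuous_on {min x u..max x u} \<phi>"
    and "\<And>y. y \<in> {min x u<..<max x u} \<Longrightarrow> (\<phi> has_real_derivative \<phi>' y) (at y)"
    and "x \<noteq> u"
  shows "((\<lambda>s. \<phi>' (sq_interp x u s) * (2 * s * (u - x))) has_integral (\<phi> u - \<phi> x)) {0..1}"
proof -
  have "((\<lambda>s. \<phi> (sq_interp x u s)) has_real_derivative \<phi>' (sq_interp x u s) * (2 * s * (u - x))) (at s)"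
    if "0 < s" "s < 1" for s
    using assms(2)[OF sq_interp_strictly_between[OF that assms(3)]]
    by (rule DERIV_chain2[OF _ has_real_derivative_sq_interp])
  then show ?thesis
    using fundamental_theorem_of_calculus_interior[of 0 1 "\<lambda>s. \<phi> (sq_interp x u s)"]
      continuous_on_comp_sq_interp[OF assms(1)]
    by (simp add: has_real_derivative_iff_has_vector_derivative)
qed

lemma has_real_derivative_sq_interp_integral:
  assumes g': "\<And>y. y \<in> {a<..<b} \<Longrightarrow> (g has_real_derivative g' y) (at y)"
    and cont_g': "continuous_on {a<..<b} g'" and cont_p: "continuous_on {0..1} p"
    and x: "x \<in> {a<..<b}" and u: "u \<in> {a<..<b}"
  shows "((\<lambda>x. sq_interp_integral p g x u) has_real_derivative
           sq_interp_integral (\<lambda>s. p s * (1 - s\<^sup>2)) g' x u) (at x)"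
proof -
  have v: "sq_interp y u s \<in> {a<..<b}" if "y \<in> {a<..<b}" "s \<in> {0..1}" for y s
    using sq_interp_in_open_interval that u by auto
  have cont_g: "continuous_on {a<..<b} g"
    using g' by (meson DERIV_isCont continuous_at_imp_continuous_on)
  have "((\<lambda>x. integral (cbox 0 1) (\<lambda>s. p s * g (sq_interp x u s))) has_field_derivative
           integral (cbox 0 1) (\<lambda>s. p s * (1 - s\<^sup>2) * g' (sq_interp x u s))) (at x within {a<..<b})"
  proof (rule leibniz_rule_field_derivative)
    fix y s :: real
    assume "y \<in> {a<..<b}" "s \<in> cbox 0 1"
    from DERIV_chain2[OF g'[OF v] has_real_derivative_sq_interp_start] this
    show "((\<lambda>y. p s * g (sq_interp y u s)) has_field_derivative p s * (1 - s\<^sup>2) * g' (sq_interp y u s))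
        (at y within {a<..<b})"
      by (auto simp: ac_simps intro: has_field_derivative_at_within DERIV_cmult)
  next
    fix y :: real
    assume "y \<in> {a<..<b}"
    then have "continuous_on {min y u..max y u} g"
      using u by (intro continuous_on_subset[OF cont_g]) auto
    then show "(\<lambda>s. p s * g (sq_interp y u s)) integrable_on cbox 0 1"
      using has_integral_sq_interp_integral[OF cont_p] by auto
  next
    have "continuous_on ({a<..<b} \<times> cbox 0 1) (\<lambda>z. sq_interp (fst z) u (snd z))"
      unfolding sq_interp_def by (intro continuous_intros)
    moreover have "(\<lambda>z. sq_interp (fst z) u (snd z)) ` ({a<..<b} \<times> cbox 0 1) \<subseteq> {a<..<b}"
      using v by auto
    ultimately have "continuous_on ({a<..<b} \<times> cbox 0 1) (\<lambda>z. g' (sq_interp (fst z) u (snd z)))"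
      by (rule continuous_on_compose2[OF cont_g'])
    moreover have "continuous_on ({a<..<b} \<times> cbox 0 1) (\<lambda>z. p (snd z))"
      by (rule continuous_on_compose2[OF cont_p]) (auto intro: continuous_intros)
    ultimately show "continuous_on ({a<..<b} \<times> cbox 0 1) (\<lambda>(y, s). p s * (1 - s\<^sup>2) * g' (sq_interp y u s))"
      by (auto simp: split_beta intro!: continuous_intros)
  qed (use x in auto)
  then show ?thesis
    using x by (simp add: sq_interp_integral_def at_within_open[of x "{a<..<b}"] mult.assoc)
qed

lemma F0_eq_sq_interp_integral:
  assumes "continuous_on {min x u..max x u} (deriv f)"
  shows "F0 f x u = sq_interp_integral (\<lambda>_. 1) (deriv f) x u"
proof -
  define H where "H r = integral {0..r} (\<lambda>s. deriv f (sq_interp x u s))" for r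
  have cont: "continuous_on {0..1} (\<lambda>s. deriv f (sq_interp x u s))"
    by (rule continuous_on_comp_sq_interp[OF assms])
  have cont_H: "continuous_on {0..1} H"
    unfolding H_def by (rule indefinite_integral_continuous_1[OF integrable_continuous_real[OF cont]])
  \<comment> \<open>substitution \<open>(1 - \<mu>) / 2 = s\<^sup>2\<close>\<close>
  define \<Phi> where "\<Phi> \<mu> = - 2 * sqrt 2 * H (sqrt ((1 - \<mu>) / 2))" for \<mu>
  have "continuous_on {-1..1} (\<lambda>\<mu>. H (sqrt ((1 - \<mu>) / 2)))"
    by (rule continuous_on_compose2[OF cont_H]) (auto intro!: continuous_intros)
  then have cont_\<Phi>: "continuous_on {-1..1} \<Phi>"
    unfolding \<Phi>_def by (intro continuous_intros)
  have "(\<Phi> has_real_derivative deriv f ((1 + \<mu>) / 2 * x + (1 - \<mu>) / 2 * u) / sqrt (1 - \<mu>)) (at \<mu>)"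
    if \<mu>: "\<mu> \<in> {-1<..<1}" for \<mu>
  proof -
    define r where "r = sqrt ((1 - \<mu>) / 2)"
    have r: "0 < r" "r < 1" "r\<^sup>2 = (1 - \<mu>) / 2" "sqrt 2 * r = sqrt (1 - \<mu>)"
      using \<mu> by (auto simp: r_def real_sqrt_mult[symmetric])
    have "(H has_real_derivative deriv f (sq_interp x u r)) (at r)"
      unfolding H_def using integral_has_real_derivative[OF cont, of r] r
      by (simp add: at_within_Icc_at)
    moreover have "((\<lambda>\<mu>. sqrt ((1 - \<mu>) / 2)) has_real_derivative - 1 / (4 * r)) (at \<mu>)"
      unfolding r_def using \<mu>
      by (auto intro!: derivative_eq_intros DERIV_real_sqrt[THEN DERIV_chain2] simp: field_simps)
    ultimately have "(\<Phi> has_real_derivative - 2 * sqrt 2 * (deriv f (sq_interp x u r) * (- 1 / (4 * r)))) (at \<mu>)"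
      unfolding \<Phi>_def r_def by (intro DERIV_cmult DERIV_chain2)
    moreover have "- 2 * sqrt 2 * (- 1 / (4 * r)) = 1 / sqrt (1 - \<mu>)"
      unfolding r(4)[symmetric] using r(1) by (simp add: field_simps)
    then have "- 2 * sqrt 2 * (d * (- 1 / (4 * r))) = d / sqrt (1 - \<mu>)" for d
      by (metis mult.left_commute times_divide_eq_right mult.right_neutral)
    moreover have "sq_interp x u r = (1 + \<mu>) / 2 * x + (1 - \<mu>) / 2 * u"
      unfolding sq_interp_def r(3) by (simp add: field_simps)
    ultimately show ?thesis
      by (simp only:)
  qed
  then have "((\<lambda>\<mu>. deriv f ((1 + \<mu>) / 2 * x + (1 - \<mu>) / 2 * u) / sqrt (1 - \<mu>))
      has_integral (\<Phi> 1 - \<Phi> (-1))) {-1..1}"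
    using fundamental_theorem_of_calculus_interior[OF _ cont_\<Phi>]
    by (simp add: has_real_derivative_iff_has_vector_derivative)
  moreover have "\<Phi> 1 - \<Phi> (-1) = 2 * sqrt 2 * sq_interp_integral (\<lambda>_. 1) (deriv f) x u"
    by (simp add: \<Phi>_def H_def sq_interp_integral_def)
  ultimately show ?thesis
    unfolding F0_def by (simp add: integral_unique)
qed

lemma has_real_derivative_max_const:
  fixes g :: "real \<Rightarrow> real"
  assumes g: "(g has_real_derivative g') (at s)" and "g s \<noteq> a"
  shows "((\<lambda>t. max (g t) a) has_real_derivative (if a < g s then g' else 0)) (at s)"
proof -
  have lim: "(g \<longlongrightarrow> g s) (at s)"
    using DERIV_isCont[OF g] by (simp add: isCont_def)
  show ?thesis
  proof (cases "a < g s")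
    case True
    have "eventually (\<lambda>t. max (g t) a = g t) (at s)"
      using order_tendstoD(1)[OF lim True] by (auto elim!: eventually_mono)
    from has_field_derivative_cong_eventually[OF this] g True show ?thesis
      by simp
  next
    case False
    then have "g s < a"
      using assms(2) by simp
    then have "eventually (\<lambda>t. max (g t) a = a) (at s)"
      using order_tendstoD(2)[OF lim \<open>g s < a\<close>] by (auto elim!: eventually_mono)
    from has_field_derivative_cong_eventually[OF this] DERIV_const[of a] False \<open>g s < a\<close>
    show ?thesis
      by simp
  qed
qed

lemma continuous_on_compact_abs_le:
  fixes g :: "real \<Rightarrow> real"
  assumes "compact S" "continuous_on S g"
  obtains B where "\<And>y. y \<in> S \<Longrightarrow> \<bar>g y\<bar> \<le> B"
  using compact_imp_bounded[OF compact_continuous_image[OF assms(2,1)]] by (auto simp: bounded_iff)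

lemma abs_bound_on_Icc:
  fixes g :: "real \<Rightarrow> real"
  assumes "continuous_on {0<..<1} g" "0 < k1" "k2 < 1"
  obtains B where "0 \<le> B" "\<And>y. y \<in> {k1..k2} \<Longrightarrow> \<bar>g y\<bar> \<le> B"
proof -
  have "continuous_on {k1..k2} g"
    using assms by (intro continuous_on_subset[OF assms(1)]) auto
  then obtain B where "\<And>y. y \<in> {k1..k2} \<Longrightarrow> \<bar>g y\<bar> \<le> B"
    using continuous_on_compact_abs_le[OF compact_Icc] by blast
  then show ?thesis
    using that[of "\<bar>B\<bar>"] by force
qed

lemma compact_subset_Icc_in_open_interval:
  fixes K :: "real set"
  assumes "compact K" "K \<subseteq> {a<..<b}" "a < b"
  obtains k1 k2 where "a < k1" "k2 < b" "K \<subseteq> {k1..k2}"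
proof (cases "K = {}")
  case True
  with assms(3) show ?thesis
    by (intro that[of "(a + b) / 2" "(a + b) / 2"]) auto
next
  case False
  obtain k1 k2 where "k1 \<in> K" "k2 \<in> K" "\<And>x. x \<in> K \<Longrightarrow> k1 \<le> x \<and> x \<le> k2"
    using compact_attains_inf[OF assms(1) False] compact_attains_sup[OF assms(1) False] by metis
  with assms(2) show ?thesis
    by (intro that[of k1 k2]) auto
qed

lemma weighted_tail_bound:
  fixes s W G C e :: real
  assumes s: "0 \<le> s" "s \<le> 1" and W: "0 \<le> W" "W \<le> 1" and "0 \<le> C" "0 \<le> e"
    and G: "\<bar>G\<bar> \<le> C \<or> (1 - s \<le> e * s \<and> G < 0)"
  shows "\<bar>(1 - s) * W * G\<bar> \<le> C + e * (C - s * W * G)"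
  using G
proof
  assume G: "\<bar>G\<bar> \<le> C"
  have "\<bar>(1 - s) * W\<bar> \<le> 1" "\<bar>s * W\<bar> \<le> 1"
    using s W by (auto simp: abs_mult intro: mult_le_one)
  then have "\<bar>(1 - s) * W\<bar> * \<bar>G\<bar> \<le> \<bar>G\<bar>" "\<bar>s * W\<bar> * \<bar>G\<bar> \<le> \<bar>G\<bar>"
    by (simp_all add: mult_left_le_one_le)
  then have "\<bar>(1 - s) * W * G\<bar> \<le> C" "\<bar>s * W * G\<bar> \<le> C"
    using G by (simp_all only: abs_mult[of _ G])
  moreover have "0 \<le> e * (C - s * W * G)"
    using calculation \<open>0 \<le> e\<close> by auto
  ultimately show ?thesis
    by linarith
next
  assume G: "1 - s \<le> e * s \<and> G < 0"
  have "0 \<le> W * - G"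
    using W G by (intro mult_nonneg_nonneg) auto
  then have "(1 - s) * (W * - G) \<le> e * s * (W * - G)"
    using G by (intro mult_right_mono) auto
  moreover have "0 \<le> (1 - s) * (W * - G)" "0 \<le> e * C"
    using \<open>0 \<le> W * - G\<close> s \<open>0 \<le> C\<close> \<open>0 \<le> e\<close> by (simp_all only: mult_nonneg_nonneg diff_ge_0_iff_ge)
  ultimately show ?thesis
    using \<open>0 \<le> C\<close> by (simp add: algebra_simps abs_mult_pos)
qed


lemma has_integral_tail_bound:
  fixes W G :: "real \<Rightarrow> real"
  assumes I: "((\<lambda>s. W s * G s) has_integral I) {0..1}"
    and S: "((\<lambda>s. s * W s * G s) has_integral S) {0..1}"
    and "0 \<le> C" "0 \<le> e"
    and WG: "\<And>s. s \<in> {0..1} \<Longrightarrow> 0 \<le> W s \<and> W s \<le> 1 \<and> (\<bar>G s\<bar> \<le> C \<or> (1 - s \<le> e * s \<and> G s < 0))"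
  shows "\<bar>I - S\<bar> \<le> C + e * (C - S)"
proof -
  have diff: "((\<lambda>s. (1 - s) * W s * G s) has_integral I - S) {0..1}"
    using has_integral_diff[OF I S] by (simp add: algebra_simps)
  have bound: "((\<lambda>s. C + e * (C - s * W s * G s)) has_integral C + e * (C - S)) {0..1}"
    using has_integral_add[OF has_integral_const_real[of C 0 1]
        has_integral_mult_right[OF has_integral_diff[OF has_integral_const_real[of C 0 1] S]]]
    by simp
  have pointwise: "\<bar>(1 - s) * W s * G s\<bar> \<le> C + e * (C - s * W s * G s)" if "s \<in> {0..1}" for s
    using that WG[OF that] \<open>0 \<le> C\<close> \<open>0 \<le> e\<close> by (intro weighted_tail_bound) auto
  have "I - S \<le> C + e * (C - S)"
    using pointwise by (intro has_integral_le[OF diff bound]) (simp add: abs_le_iff)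
  moreover have "- (I - S) \<le> C + e * (C - S)"
    using pointwise by (intro has_integral_le[OF has_integral_neg[OF diff] bound]) (simp add: abs_le_iff)
  ultimately show ?thesis
    by linarith
qed

lemma sq_interp_near_end:
  assumes "0 \<le> s" "s \<le> 1" "0 \<le> x" "0 \<le> c" "c \<le> u - x" "u \<le> 1"
    and "0 < e" "0 \<le> \<eta>" "\<eta> \<le> e / (1 + e)"
  shows "sq_interp x u s \<le> 1 - \<eta> * c \<or> (1 - s \<le> e * s \<and> u - 2 * \<eta> < sq_interp x u s)"
proof -
  have v: "sq_interp x u s = u - (1 - s\<^sup>2) * (u - x)"
    by (simp add: sq_interp_def algebra_simps)
  have "s\<^sup>2 \<le> s"
    using assms by (simp add: power2_eq_square mult_left_le_one_le)
  show ?thesis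
  proof (cases "s \<le> 1 - \<eta>")
    case True
    then have "\<eta> * c \<le> (1 - s\<^sup>2) * (u - x)"
      using \<open>s\<^sup>2 \<le> s\<close> assms by (intro mult_mono) auto
    then show ?thesis
      using v assms by auto
  next
    case False
    have "(1 - s) * (1 + e) < \<eta> * (1 + e)"
      using False \<open>0 < e\<close> by (intro mult_strict_right_mono) auto
    also have "\<dots> \<le> e"
      using assms by (simp add: le_divide_eq)
    finally have "1 - s \<le> e * s"
      by (simp add: algebra_simps)
    have "(1 - s\<^sup>2) * (u - x) \<le> (1 - s\<^sup>2) * 1"
      using assms by (intro mult_left_mono) (auto simp: power_le_one)
    moreover have "0 \<le> (1 - s)\<^sup>2"
      by simp
    then have "1 - s\<^sup>2 \<le> 2 * (1 - s)"
      by (simp add: power2_eq_square algebra_simps)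
    ultimately show ?thesis
      using v False \<open>1 - s \<le> e * s\<close> by auto
  qed
qed

lemma relative_error_div:
  fixes a b e :: real
  assumes "\<bar>a - b\<bar> \<le> e * \<bar>b\<bar>" "b \<noteq> 0"
  shows "\<bar>a / b - 1\<bar> \<le> e"
proof -
  have "a / b - 1 = (a - b) / b"
    using assms(2) by (simp add: field_simps)
  with assms show ?thesis
    by (simp add: abs_divide pos_divide_le_eq)
qed

lemma relative_error_mult_div:
  fixes p q r e :: real
  assumes p: "\<bar>p - 1\<bar> \<le> e" and q: "\<bar>q - 1\<bar> \<le> e" and r: "\<bar>r - 1\<bar> \<le> e" and "e \<le> 1 / 6"
  shows "\<bar>p * q / r - 1\<bar> \<le> 4 * e"
proof -
  have "0 \<le> e" "5 / 6 \<le> r"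
    using r \<open>e \<le> 1 / 6\<close> by auto
  have "\<bar>(p - 1) * (q - 1)\<bar> \<le> e * e"
    unfolding abs_mult using p q by (intro mult_mono) auto
  also have "\<dots> \<le> e / 6"
    using \<open>0 \<le> e\<close> \<open>e \<le> 1 / 6\<close> by (intro order_trans[OF mult_left_mono[of e "1 / 6"]]) auto
  moreover have "\<bar>p * q - r\<bar> \<le> \<bar>(p - 1) * (q - 1)\<bar> + \<bar>p - 1\<bar> + \<bar>q - 1\<bar> + \<bar>r - 1\<bar>"
  proof -
    have "p * q - r = (p - 1) * (q - 1) + (p - 1) + (q - 1) - (r - 1)"
      by (simp add: algebra_simps)
    then show ?thesis
      by arith
  qed
  ultimately have "\<bar>p * q - r\<bar> \<le> 19 / 6 * e"
    using p q r by linarith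
  also have "\<dots> \<le> 4 * e * r"
    using \<open>0 \<le> e\<close> \<open>5 / 6 \<le> r\<close> by (intro order_trans[OF _ mult_left_mono[of "5 / 6" r "4 * e"]]) auto
  finally have "\<bar>p * q - r\<bar> / r \<le> 4 * e"
    using \<open>5 / 6 \<le> r\<close> by (simp add: divide_le_eq)
  moreover have "p * q / r - 1 = (p * q - r) / r"
    using \<open>5 / 6 \<le> r\<close> by (simp add: field_simps)
  ultimately show ?thesis
    using \<open>5 / 6 \<le> r\<close> by (simp add: abs_divide)
qed

lemma ratio_to_inverse_estimate:
  fixes a b x u c d :: real
  assumes ratio: "\<bar>a * (u - x) / b - 1\<bar> \<le> d" and "0 < c" "c \<le> u - x" "u \<le> 1"
  shows "\<bar>a / b - 1 / (1 - x)\<bar> \<le> d / c + (1 - u) / c\<^sup>2"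
proof -
  define D where "D = u - x"
  have D: "c \<le> D" "D \<le> 1 - x" "0 < D"
    using assms by (auto simp: D_def)
  have "\<bar>a / b - 1 / D\<bar> = \<bar>a * D / b - 1\<bar> / D"
    using D by (simp add: field_simps abs_divide)
  also have "\<dots> \<le> d / c"
    using ratio D \<open>0 < c\<close> by (intro frac_le) (auto simp: D_def)
  finally have "\<bar>a / b - 1 / D\<bar> \<le> d / c" .
  moreover have "\<bar>1 / D - 1 / (1 - x)\<bar> \<le> (1 - u) / c\<^sup>2"
  proof -
    have "1 / D - 1 / (1 - x) = (1 - u) / (D * (1 - x))"
      using D by (simp add: D_def field_simps)
    then have "\<bar>1 / D - 1 / (1 - x)\<bar> = (1 - u) / (D * (1 - x))"
      using D assms by simp
    also have "\<dots> \<le> (1 - u) / c\<^sup>2"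
      unfolding power2_eq_square using D \<open>0 < c\<close> assms by (intro divide_left_mono mult_mono) auto
    finally show ?thesis .
  qed
  ultimately show ?thesis
    using abs_triangle_ineq[of "a / b - 1 / D" "1 / D - 1 / (1 - x)"] by argo
qed

lemma eventually_relative_error:
  fixes J S :: "'a \<Rightarrow> 'b \<Rightarrow> real"
  assumes tail: "\<And>e. 0 < e \<Longrightarrow> \<exists>C. eventually (\<lambda>u. \<forall>x\<in>K. \<bar>J u x - S u x\<bar> \<le> C + e * (C - S u x)) F"
    and to_bot: "\<And>T. eventually (\<lambda>u. \<forall>x\<in>K. S u x \<le> T) F"
    and "0 < e"
  shows "eventually (\<lambda>u. \<forall>x\<in>K. \<bar>J u x - S u x\<bar> \<le> e * \<bar>S u x\<bar>) F"
proof -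
  obtain C where C: "eventually (\<lambda>u. \<forall>x\<in>K. \<bar>J u x - S u x\<bar> \<le> C + e / 2 * (C - S u x)) F"
    using tail[of "e / 2"] \<open>0 < e\<close> by auto
  from C to_bot[of "- (2 + e) * \<bar>C\<bar> / e"]
  show ?thesis
  proof eventually_elim
    case (elim u)
    show ?case
    proof
      fix x
      assume "x \<in> K"
      then have tail_x: "\<bar>J u x - S u x\<bar> \<le> C + e / 2 * (C - S u x)"
        and C_small: "(2 + e) * \<bar>C\<bar> \<le> e * - S u x"
        using elim \<open>0 < e\<close> by (auto simp: field_simps)
      have "0 \<le> (2 + e) * \<bar>C\<bar>"
        using \<open>0 < e\<close> by simp
      then have "0 \<le> e * - S u x"
        using C_small by linarith
      then have "\<bar>S u x\<bar> = - S u x"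
        using \<open>0 < e\<close> by (simp add: mult_le_0_iff)
      have "(2 + e) * C \<le> (2 + e) * \<bar>C\<bar>"
        using \<open>0 < e\<close> by (intro mult_left_mono) auto
      have "\<bar>J u x - S u x\<bar> \<le> ((2 + e) * C + e * - S u x) / 2"
        using tail_x by (simp add: field_simps)
      also have "\<dots> \<le> e * - S u x"
        using \<open>(2 + e) * C \<le> (2 + e) * \<bar>C\<bar>\<close> C_small by simp
      finally show "\<bar>J u x - S u x\<bar> \<le> e * \<bar>S u x\<bar>"
        using \<open>\<bar>S u x\<bar> = - S u x\<close> by simp
    qed
  qed
qed

lemma continuous_on_segment:
  fixes x u :: real
  assumes "continuous_on {0<..<1} g" "x \<in> {0<..<1}" "u \<in> {0<..<1}"
  shows "continuous_on {min x u..max x u} g"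
  by (rule continuous_on_subset[OF assms(1)]) (use assms in auto)

lemma has_integral_sq_interp_integral_01:
  assumes "continuous_on {0..1} p" "continuous_on {0<..<1} g" "x \<in> {0<..<1}" "u \<in> {0<..<1}"
  shows "((\<lambda>s. p s * g (sq_interp x u s)) has_integral sq_interp_integral p g x u) {0..1}"
  using assms by (intro has_integral_sq_interp_integral continuous_on_segment)

section \<open>\<open>F0\<close> and its derivatives as integrals along the substitution\<close>

lemma smooth_on_has_real_derivative:
  assumes "smooth_on S g" "x \<in> S"
  shows "((deriv ^^ k) g has_real_derivative (deriv ^^ Suc k) g x) (at x)"
  using assms by (simp add: smooth_on_def DERIV_deriv_iff_real_differentiable)

lemma smooth_on_continuous_on:
  assumes "smooth_on S g"
  shows "continuous_on S ((deriv ^^ k) g)"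
  using assms unfolding smooth_on_def
  by (meson differentiable_imp_continuous_within continuous_at_imp_continuous_on)

locale inverse_profile =
  fixes f :: "real \<Rightarrow> real"
  assumes smooth: "smooth_on {0<..<1} f"
    and deriv_neg: "\<And>u. 0 < u \<Longrightarrow> u < 1 \<Longrightarrow> deriv f u < 0"
    and lim_0: "filterlim f at_top (at_right 0)"
    and lim_1: "filterlim f at_bot (at_left 1)"
    and deriv3_neg_0: "\<exists>\<epsilon>>0. \<forall>u. 0 < u \<and> u < \<epsilon> \<longrightarrow> (deriv ^^ 3) f u < 0"
    and deriv3_neg_1: "\<exists>\<epsilon>>0. \<forall>u. 1 - \<epsilon> < u \<and> u < 1 \<longrightarrow> (deriv ^^ 3) f u < 0"
begin

abbreviation "f1 \<equiv> deriv f"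
abbreviation "f2 \<equiv> deriv f1"
abbreviation "f3 \<equiv> deriv f2"

lemma deriv_iterate_eq: "(deriv ^^ 1) f = f1" "(deriv ^^ 2) f = f2" "(deriv ^^ 3) f = f3"
  by (simp_all add: numeral_2_eq_2 numeral_3_eq_3)

lemma DERIV_f: "y \<in> {0<..<1} \<Longrightarrow> (f has_real_derivative f1 y) (at y)"
  and DERIV_f1: "y \<in> {0<..<1} \<Longrightarrow> (f1 has_real_derivative f2 y) (at y)"
  and DERIV_f2: "y \<in> {0<..<1} \<Longrightarrow> (f2 has_real_derivative f3 y) (at y)"
  using smooth_on_has_real_derivative[OF smooth, of y 0] smooth_on_has_real_derivative[OF smooth, of y 1]
    smooth_on_has_real_derivative[OF smooth, of y 2]
  by (simp_all add: numeral_2_eq_2 numeral_3_eq_3)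

lemma continuous_on_f: "continuous_on {0<..<1} f"
  and continuous_on_f1: "continuous_on {0<..<1} f1"
  and continuous_on_f2: "continuous_on {0<..<1} f2"
  and continuous_on_f3: "continuous_on {0<..<1} f3"
  using smooth_on_continuous_on[OF smooth, of 0] smooth_on_continuous_on[OF smooth, of 1]
    smooth_on_continuous_on[OF smooth, of 2] smooth_on_continuous_on[OF smooth, of 3]
  by (simp_all add: deriv_iterate_eq)

text \<open>The extra weight \<open>s\<close>
  in \<open>S0\<close>, \<open>S1\<close> makes the integrands exact derivatives along the path, which gives them
  closed forms.\<close>

abbreviation "J0 \<equiv> sq_interp_integral (\<lambda>_. 1) f1"
abbreviation "J1 \<equiv> sq_interp_integral (\<lambda>s. 1 - s\<^sup>2) f2"
abbreviation "J2 \<equiv> sq_interp_integral (\<lambda>s. (1 - s\<^sup>2)\<^sup>2) f3"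
abbreviation "S0 \<equiv> sq_interp_integral (\<lambda>s. s) f1"
abbreviation "S1 \<equiv> sq_interp_integral (\<lambda>s. s * (1 - s\<^sup>2)) f2"

lemma F0_eq_J0:
  assumes "x \<in> {0<..<1}" "u \<in> {0<..<1}"
  shows "F0 f x u = J0 x u"
  using F0_eq_sq_interp_integral continuous_on_segment[OF continuous_on_f1 assms] by blast

lemma has_real_derivative_J0:
  assumes "x \<in> {0<..<1}" "u \<in> {0<..<1}"
  shows "((\<lambda>x. J0 x u) has_real_derivative J1 x u) (at x)"
  using has_real_derivative_sq_interp_integral[OF DERIV_f1 continuous_on_f2 _ assms, of "\<lambda>_. 1"]
  by simp

lemma has_real_derivative_J1:
  assumes "x \<in> {0<..<1}" "u \<in> {0<..<1}"
  shows "((\<lambda>x. J1 x u) has_real_derivative J2 x u) (at x)"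
  using has_real_derivative_sq_interp_integral[OF DERIV_f2 continuous_on_f3 _ assms, of "\<lambda>s. 1 - s\<^sup>2"]
  by (simp add: power2_eq_square continuous_intros)

lemma deriv_F0:
  assumes "x \<in> {0<..<1}" "u \<in> {0<..<1}"
  shows "deriv (\<lambda>x. F0 f x u) x = J1 x u"
proof (rule DERIV_imp_deriv)
  show "((\<lambda>x. F0 f x u) has_real_derivative J1 x u) (at x)"
    by (rule has_field_derivative_transform_within_open[OF has_real_derivative_J0[OF assms]
        open_greaterThanLessThan assms(1)]) (use assms(2) in \<open>simp add: F0_eq_J0\<close>)
qed

lemma deriv2_F0:
  assumes "x \<in> {0<..<1}" "u \<in> {0<..<1}"
  shows "deriv (deriv (\<lambda>x. F0 f x u)) x = J2 x u"
proof (rule DERIV_imp_deriv)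
  show "(deriv (\<lambda>x. F0 f x u) has_real_derivative J2 x u) (at x)"
    by (rule has_field_derivative_transform_within_open[OF has_real_derivative_J1[OF assms]
        open_greaterThanLessThan assms(1)]) (use assms(2) in \<open>simp add: deriv_F0\<close>)
qed

lemma has_integral_J0: "x \<in> {0<..<1} \<Longrightarrow> u \<in> {0<..<1} \<Longrightarrow>
    ((\<lambda>s. 1 * f1 (sq_interp x u s)) has_integral J0 x u) {0..1}"
  by (rule has_integral_sq_interp_integral_01[OF continuous_on_const continuous_on_f1])

lemma has_integral_J1: "x \<in> {0<..<1} \<Longrightarrow> u \<in> {0<..<1} \<Longrightarrow>
    ((\<lambda>s. (1 - s\<^sup>2) * f2 (sq_interp x u s)) has_integral J1 x u) {0..1}"
  by (rule has_integral_sq_interp_integral_01[OF _ continuous_on_f2]) (intro continuous_intros)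

lemma has_integral_J2: "x \<in> {0<..<1} \<Longrightarrow> u \<in> {0<..<1} \<Longrightarrow>
    ((\<lambda>s. (1 - s\<^sup>2)\<^sup>2 * f3 (sq_interp x u s)) has_integral J2 x u) {0..1}"
  by (rule has_integral_sq_interp_integral_01[OF _ continuous_on_f3]) (intro continuous_intros)

lemma has_integral_S0: "x \<in> {0<..<1} \<Longrightarrow> u \<in> {0<..<1} \<Longrightarrow>
    ((\<lambda>s. s * f1 (sq_interp x u s)) has_integral S0 x u) {0..1}"
  by (rule has_integral_sq_interp_integral_01[OF continuous_on_id continuous_on_f1])

lemma has_integral_S1: "x \<in> {0<..<1} \<Longrightarrow> u \<in> {0<..<1} \<Longrightarrow>
    ((\<lambda>s. s * (1 - s\<^sup>2) * f2 (sq_interp x u s)) has_integral S1 x u) {0..1}"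
  by (rule has_integral_sq_interp_integral_01[OF _ continuous_on_f2]) (intro continuous_intros)

lemma S0_eq:
  assumes x: "x \<in> {0<..<1}" and u: "u \<in> {0<..<1}" and "x \<noteq> u"
  shows "S0 x u = (f u - f x) / (2 * (u - x))"
proof -
  have "((\<lambda>s. f1 (sq_interp x u s) * (2 * s * (u - x))) has_integral (f u - f x)) {0..1}"
    using x u \<open>x \<noteq> u\<close>
    by (intro has_integral_sq_interp_substitution continuous_on_segment continuous_on_f DERIV_f) auto
  from has_integral_mult_right[OF this, of "1 / (2 * (u - x))"]
  have "((\<lambda>s. s * f1 (sq_interp x u s)) has_integral 1 / (2 * (u - x)) * (f u - f x)) {0..1}"
    by (rule has_integral_eq[rotated]) (use \<open>x \<noteq> u\<close> in \<open>simp add: field_simps\<close>)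
  then show ?thesis
    using has_integral_unique[OF has_integral_S0[OF x u]] by simp
qed

lemma S1_eq:
  assumes x: "x \<in> {0<..<1}" and u: "u \<in> {0<..<1}" and "x \<noteq> u"
  shows "S1 x u = (2 * S0 x u - f1 x) / (2 * (u - x))"
proof -
  \<comment> \<open>substitution with \<open>\<phi> y = (u - y) * f1 y\<close>, using \<open>u - sq_interp x u s = (1 - s\<^sup>2) * (u - x)\<close>\<close>
  have "((\<lambda>s. ((u - sq_interp x u s) * f2 (sq_interp x u s) - f1 (sq_interp x u s)) * (2 * s * (u - x)))
      has_integral ((u - u) * f1 u - (u - x) * f1 x)) {0..1}"
  proof (rule has_integral_sq_interp_substitution[OF _ _ \<open>x \<noteq> u\<close>])
    show "continuous_on {min x u..max x u} (\<lambda>y. (u - y) * f1 y)"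
      using x u by (intro continuous_on_segment continuous_intros continuous_on_f1)
    fix y
    assume "y \<in> {min x u<..<max x u}"
    then have "y \<in> {0<..<1}"
      using x u by auto
    then show "((\<lambda>y. (u - y) * f1 y) has_real_derivative (u - y) * f2 y - f1 y) (at y)"
      by (auto intro!: derivative_eq_intros DERIV_f1)
  qed
  moreover have "((u - sq_interp x u s) * f2 (sq_interp x u s) - f1 (sq_interp x u s)) * (2 * s * (u - x))
      = 2 * (u - x)\<^sup>2 * (s * (1 - s\<^sup>2) * f2 (sq_interp x u s)) - 2 * (u - x) * (s * f1 (sq_interp x u s))"
    for s
    by (simp add: sq_interp_def power2_eq_square algebra_simps)
  ultimately have "((\<lambda>s. 2 * (u - x)\<^sup>2 * (s * (1 - s\<^sup>2) * f2 (sq_interp x u s))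
      - 2 * (u - x) * (s * f1 (sq_interp x u s))) has_integral (u - u) * f1 u - (u - x) * f1 x) {0..1}"
    by (simp only:)
  moreover have "((\<lambda>s. 2 * (u - x)\<^sup>2 * (s * (1 - s\<^sup>2) * f2 (sq_interp x u s))
      - 2 * (u - x) * (s * f1 (sq_interp x u s)))
      has_integral (2 * (u - x)\<^sup>2 * S1 x u - 2 * (u - x) * S0 x u)) {0..1}"
    by (intro has_integral_diff has_integral_mult_right has_integral_S0 has_integral_S1 x u)
  ultimately have "(u - u) * f1 u - (u - x) * f1 x = 2 * (u - x)\<^sup>2 * S1 x u - 2 * (u - x) * S0 x u"
    by (rule has_integral_unique)
  moreover have "(u - x) * (2 * (u - x) * S1 x u - 2 * S0 x u + f1 x)
      = 2 * (u - x)\<^sup>2 * S1 x u - 2 * (u - x) * S0 x u - ((u - u) * f1 u - (u - x) * f1 x)"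
    by (simp add: power2_eq_square algebra_simps)
  ultimately have "(u - x) * (2 * (u - x) * S1 x u - 2 * S0 x u + f1 x) = 0"
    by simp
  then have "2 * (u - x) * S1 x u - 2 * S0 x u + f1 x = 0"
    using \<open>x \<noteq> u\<close> by simp
  then have "S1 x u * (2 * (u - x)) = 2 * S0 x u - f1 x"
    by (simp add: algebra_simps)
  then show ?thesis
    using \<open>x \<noteq> u\<close> by (simp add: eq_divide_eq)
qed

section \<open>\<open>F0\<close> at the endpoints\<close>

lemma S0_le_half_diff:
  assumes x: "x \<in> {0<..<1}" and u: "u \<in> {0<..<1}" and "x \<noteq> u"
  shows "S0 x u \<le> - \<bar>f u - f x\<bar> / 2"
proof -
  have "S0 x u \<le> 0"
  proof (rule has_integral_le[OF has_integral_S0[OF x u] has_integral_0])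
    fix s :: real
    assume s: "s \<in> {0..1}"
    then have "f1 (sq_interp x u s) < 0"
      using deriv_neg sq_interp_in_open_interval[of 0 x 1 u s] x u by auto
    with s show "s * f1 (sq_interp x u s) \<le> 0"
      by (simp add: mult_nonneg_nonpos)
  qed
  moreover have "\<bar>f u - f x\<bar> / 2 \<le> \<bar>f u - f x\<bar> / (2 * \<bar>u - x\<bar>)"
    using x u \<open>x \<noteq> u\<close> by (intro divide_left_mono) auto
  moreover have "\<bar>S0 x u\<bar> = \<bar>f u - f x\<bar> / (2 * \<bar>u - x\<bar>)"
    unfolding S0_eq[OF assms] abs_divide abs_mult by simp
  ultimately show ?thesis
    by linarith
qed

lemma J0_le_S0:
  assumes x: "x \<in> {0<..<1}" and u: "u \<in> {0<..<1}"
  shows "J0 x u \<le> S0 x u"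
proof (rule has_integral_le[OF has_integral_J0[OF x u] has_integral_S0[OF x u]])
  fix s :: real
  assume "s \<in> {0..1}"
  moreover have "f1 (sq_interp x u s) < 0"
    using calculation deriv_neg sq_interp_in_open_interval[of 0 x 1 u s] x u by auto
  ultimately show "1 * f1 (sq_interp x u s) \<le> s * f1 (sq_interp x u s)"
    by (simp add: mult_le_cancel_right1)
qed

lemma F0_tendsto_at_bot:
  assumes u: "u \<in> {0<..<1}"
    and ev: "eventually (\<lambda>x. x \<in> {0<..<1} \<and> x \<noteq> u) F"
    and lim: "filterlim (\<lambda>x. \<bar>f x\<bar>) at_top F"
  shows "filterlim (\<lambda>x. F0 f x u) at_bot F"
  unfolding filterlim_at_bot
proof
  fix Z :: real
  have "eventually (\<lambda>x. \<bar>f u\<bar> + 2 * \<bar>Z\<bar> \<le> \<bar>f x\<bar>) F"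
    using lim by (simp add: filterlim_at_top)
  with ev show "eventually (\<lambda>x. F0 f x u \<le> Z) F"
  proof eventually_elim
    case (elim x)
    then have "F0 f x u \<le> - \<bar>f u - f x\<bar> / 2"
      using F0_eq_J0[of x u] J0_le_S0[of x u] S0_le_half_diff[of x u] u by simp
    moreover have "\<bar>f x\<bar> - \<bar>f u\<bar> \<le> \<bar>f u - f x\<bar>"
      using abs_triangle_ineq2[of "f x" "f u"] by (simp add: abs_minus_commute)
    ultimately have "F0 f x u \<le> - \<bar>Z\<bar>"
      using elim(2) by argo
    then show ?case
      by linarith
  qed
qed

lemma F0_tendsto_at_bot_0:
  assumes "u \<in> {0<..<1}"
  shows "filterlim (\<lambda>x. F0 f x u) at_bot (at_right 0)"
proof (rule F0_tendsto_at_bot[OF assms])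
  show "eventually (\<lambda>x. x \<in> {0<..<1} \<and> x \<noteq> u) (at_right 0)"
    using assms unfolding eventually_at_right_field by (intro exI[of _ u]) auto
  show "filterlim (\<lambda>x. \<bar>f x\<bar>) at_top (at_right 0)"
    by (rule filterlim_at_top_mono[OF lim_0]) (intro always_eventually allI abs_ge_self)
qed

lemma F0_tendsto_at_bot_1:
  assumes "u \<in> {0<..<1}"
  shows "filterlim (\<lambda>x. F0 f x u) at_bot (at_left 1)"
proof (rule F0_tendsto_at_bot[OF assms])
  show "eventually (\<lambda>x. x \<in> {0<..<1} \<and> x \<noteq> u) (at_left 1)"
    using assms unfolding eventually_at_left_field by (intro exI[of _ u]) auto
  have "filterlim (\<lambda>x. - f x) at_top (at_left 1)"
    using lim_1 by (simp add: filterlim_uminus_at_top)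
  then show "filterlim (\<lambda>x. \<bar>f x\<bar>) at_top (at_left 1)"
    by (rule filterlim_at_top_mono) (intro always_eventually allI abs_ge_minus_self)
qed

section \<open>Concavity for \<open>u\<^sub>1\<close> near 1\<close>

definition taylor2 :: "real \<Rightarrow> real \<Rightarrow> real" where
  "taylor2 u y = f y + (u - y) * f1 y + (u - y)\<^sup>2 / 2 * f2 y"

lemma taylor2_self [simp]: "taylor2 u u = f u"
  by (simp add: taylor2_def)

lemma has_real_derivative_taylor2:
  assumes "y \<in> {0<..<1}"
  shows "(taylor2 u has_real_derivative (u - y)\<^sup>2 / 2 * f3 y) (at y)"
  unfolding taylor2_def[abs_def] using assms
  by (auto intro!: derivative_eq_intros DERIV_f DERIV_f1 DERIV_f2 simp: field_simps power2_eq_square)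

lemma continuous_on_taylor2: "continuous_on {0<..<1} (taylor2 u)"
  unfolding taylor2_def[abs_def]
  by (intro continuous_intros continuous_on_f continuous_on_f1 continuous_on_f2) auto

lemma has_integral_taylor2_remainder:
  assumes x: "0 < x" "x \<le> a" and u: "a < u" "u < 1"
  shows "((\<lambda>s. if a < sq_interp x u s
      then (u - sq_interp x u s)\<^sup>2 / 2 * f3 (sq_interp x u s) * (2 * s * (u - x)) else 0)
    has_integral (f u - taylor2 u a)) {0..1}"
proof -
  define G where "G s = taylor2 u (max (sq_interp x u s) a)" for s
  define s0 where "s0 = sqrt ((a - x) / (u - x))"
  have "((\<lambda>s. if a < sq_interp x u s
      then (u - sq_interp x u s)\<^sup>2 / 2 * f3 (sq_interp x u s) * (2 * s * (u - x)) else 0)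
    has_integral (G 1 - G 0)) {0..1}"
  proof (rule fundamental_theorem_of_calculus_interior_strong[where S = "{s0}"])
    have "(\<lambda>s. max (sq_interp x u s) a) ` {0..1} \<subseteq> {0<..<1}"
      using sq_interp_between[of _ x u] x u by fastforce
    then show "continuous_on {0..1} G"
      unfolding G_def
      by (rule continuous_on_compose2[OF continuous_on_taylor2, rotated])
        (intro continuous_intros continuous_on_sq_interp)
  next
    fix s
    assume s: "s \<in> {0<..<1} - {s0}"
    have "sq_interp x u s \<noteq> a"
    proof
      assume "sq_interp x u s = a"
      then have "s\<^sup>2 = (a - x) / (u - x)"
        using x u by (simp add: sq_interp_def field_simps)
      then have "s = s0"
        unfolding s0_def using s by (simp add: real_sqrt_unique)
      with s show False
        by simp
    qed
    moreover have "max (sq_interp x u s) a \<in> {0<..<1}"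
      using sq_interp_in_open_interval[of 0 x 1 u s] x u s by auto
    ultimately have "(G has_real_derivative (u - max (sq_interp x u s) a)\<^sup>2 / 2 * f3 (max (sq_interp x u s) a)
        * (if a < sq_interp x u s then 2 * s * (u - x) else 0)) (at s)"
      unfolding G_def
      by (intro DERIV_chain2[OF has_real_derivative_taylor2]
          has_real_derivative_max_const[OF has_real_derivative_sq_interp])
    moreover have "(u - max (sq_interp x u s) a)\<^sup>2 / 2 * f3 (max (sq_interp x u s) a)
        * (if a < sq_interp x u s then 2 * s * (u - x) else 0) = (if a < sq_interp x u s
        then (u - sq_interp x u s)\<^sup>2 / 2 * f3 (sq_interp x u s) * (2 * s * (u - x)) else 0)"
      by (simp add: max_def)
    ultimately show "(G has_vector_derivative (if a < sq_interp x u s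
        then (u - sq_interp x u s)\<^sup>2 / 2 * f3 (sq_interp x u s) * (2 * s * (u - x)) else 0)) (at s)"
      by (simp only: has_real_derivative_iff_has_vector_derivative)
  qed auto
  moreover have "G 1 = f u" "G 0 = taylor2 u a"
    using u x by (simp_all add: G_def)
  ultimately show ?thesis
    by simp
qed

lemma J2_le_taylor2_remainder:
  assumes x: "0 < x" "x \<le> a" and u: "a < u" "u < 1" and "0 \<le> M"
    and f3_le: "\<And>y. x \<le> y \<Longrightarrow> y \<le> a \<Longrightarrow> f3 y \<le> M"
    and f3_neg: "\<And>y. a < y \<Longrightarrow> y < 1 \<Longrightarrow> f3 y < 0"
  shows "J2 x u \<le> M + (f u - taylor2 u a)"
proof -
  define g where "g s = (if a < sq_interp x u s
      then (u - sq_interp x u s)\<^sup>2 / 2 * f3 (sq_interp x u s) * (2 * s * (u - x)) else 0)" for s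
  have "((\<lambda>s. M + g s) has_integral (M + (f u - taylor2 u a))) {0..1}"
    using has_integral_add[OF has_integral_const_real[of M 0 1] has_integral_taylor2_remainder[OF x u]]
    by (simp add: g_def)
  moreover have "(1 - s\<^sup>2)\<^sup>2 * f3 (sq_interp x u s) \<le> M + g s" if s: "s \<in> {0..1}" for s
  proof -
    define y where "y = sq_interp x u s"
    have y: "x \<le> y" "y \<le> u"
      using sq_interp_between[of s x u] s x u by (auto simp: y_def)
    have w: "0 \<le> (1 - s\<^sup>2)\<^sup>2" "(1 - s\<^sup>2)\<^sup>2 \<le> 1"
      using s by (auto simp: power_le_one)
    show ?thesis
    proof (cases "a < y")
      case True
      \<comment> \<open>\<open>u - y = (1 - s\<^sup>2) * (u - x)\<close>, so \<open>g s\<close> is the integrand times \<open>s * (u - x) ^ 3 \<in> [0, 1]\<close>\<close>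
      have "g s = (1 - s\<^sup>2)\<^sup>2 * f3 y * (s * (u - x) ^ 3)"
        using True by (simp add: g_def y_def[symmetric]) (simp add: y_def sq_interp_def power2_eq_square power3_eq_cube algebra_simps)
      moreover have "0 \<le> s * (u - x) ^ 3" "s * (u - x) ^ 3 \<le> 1"
        using s x u by (auto intro!: mult_le_one power_le_one)
      moreover have "(1 - s\<^sup>2)\<^sup>2 * f3 y \<le> 0"
        using f3_neg[of y] True y u w by (simp add: mult_nonneg_nonpos)
      ultimately have "(1 - s\<^sup>2)\<^sup>2 * f3 y \<le> g s"
        by (simp add: mult_le_cancel_left1)
      then show ?thesis
        using \<open>0 \<le> M\<close> by (simp add: y_def)
    next
      case False
      then have "(1 - s\<^sup>2)\<^sup>2 * f3 y \<le> (1 - s\<^sup>2)\<^sup>2 * M"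
        using f3_le[of y] y w by (intro mult_left_mono) auto
      also have "\<dots> \<le> M"
        using w \<open>0 \<le> M\<close> by (simp add: mult_left_le_one_le)
      finally show ?thesis
        using False by (simp add: g_def y_def)
    qed
  qed
  ultimately show ?thesis
    using has_integral_le[OF has_integral_J2] x u by force
qed


lemma f3_bounded_above:
  assumes "a < 1"
  obtains M where "0 \<le> M" "\<And>y. 0 < y \<Longrightarrow> y \<le> a \<Longrightarrow> f3 y \<le> M"
proof -
  obtain e where e: "0 < e" "\<And>y. 0 < y \<Longrightarrow> y < e \<Longrightarrow> f3 y < 0"
    using deriv3_neg_0 by (auto simp: deriv_iterate_eq)
  have "continuous_on {e..a} f3"
    using e(1) assms by (intro continuous_on_subset[OF continuous_on_f3]) auto
  then obtain B where B: "\<And>y. y \<in> {e..a} \<Longrightarrow> \<bar>f3 y\<bar> \<le> B"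
    using continuous_on_compact_abs_le[OF compact_Icc] by blast
  show ?thesis
  proof
    show "0 \<le> \<bar>B\<bar>"
      by simp
    show "f3 y \<le> \<bar>B\<bar>" if "0 < y" "y \<le> a" for y
      using e(2)[of y] B[of y] that by (cases "y < e") auto
  qed
qed

lemma taylor2_lower_bound:
  assumes "a \<le> u" "u \<le> a + 1"
  shows "- (\<bar>f a\<bar> + \<bar>f1 a\<bar> + \<bar>f2 a\<bar>) \<le> taylor2 u a"
proof -
  have "\<bar>u - a\<bar> \<le> 1" "(u - a)\<^sup>2 \<le> 1"
    using assms by (auto simp: abs_square_le_1)
  then have "\<bar>(u - a) * f1 a\<bar> \<le> \<bar>f1 a\<bar>" "(u - a)\<^sup>2 * \<bar>f2 a\<bar> \<le> \<bar>f2 a\<bar>"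
    by (auto simp: abs_mult intro!: mult_left_le_one_le)
  then have "\<bar>(u - a) * f1 a\<bar> \<le> \<bar>f1 a\<bar>" "\<bar>(u - a)\<^sup>2 / 2 * f2 a\<bar> \<le> \<bar>f2 a\<bar>"
    by (simp_all add: abs_mult)
  then show ?thesis
    unfolding taylor2_def by (auto simp: abs_le_iff)
qed

lemma J2_neg_above:
  assumes "a < x" "x < 1" "a < u" "u < 1" "0 \<le> a"
    and f3_neg: "\<And>y. a < y \<Longrightarrow> y < 1 \<Longrightarrow> f3 y < 0"
  shows "J2 x u < 0"
proof -
  have "J2 x u < integral {0..1} (\<lambda>_::real. 0)"
    unfolding sq_interp_integral_def
  proof (rule integral_less_real)
    show "continuous_on {0..1} (\<lambda>s. (1 - s\<^sup>2)\<^sup>2 * f3 (sq_interp x u s))"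
      using assms by (intro continuous_intros continuous_on_comp_sq_interp continuous_on_segment
          continuous_on_f3) auto
    fix s :: real
    assume s: "s \<in> {0<..<1}"
    then have "a < sq_interp x u s" "sq_interp x u s < 1"
      using sq_interp_between[of s x u] assms by auto
    moreover have "s\<^sup>2 < 1"
      using s by (simp add: abs_square_less_1)
    then have "0 < (1 - s\<^sup>2)\<^sup>2"
      by simp
    ultimately show "(1 - s\<^sup>2)\<^sup>2 * f3 (sq_interp x u s) < 0"
      using f3_neg by (simp add: mult_pos_neg)
  qed auto
  then show ?thesis
    by simp
qed

lemma deriv2_F0_neg_near_1:
  "\<exists>\<delta>>0. \<forall>\<xi> u. 0 < \<xi> \<and> \<xi> < 1 \<and> 1 - \<delta> < u \<and> u < 1 \<longrightarrow> deriv (deriv (\<lambda>x. F0 f x u)) \<xi> < 0"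
proof -
  obtain e where e: "0 < e" "\<And>y. 1 - e < y \<Longrightarrow> y < 1 \<Longrightarrow> f3 y < 0"
    using deriv3_neg_1 by (auto simp: deriv_iterate_eq)
  define a where "a = max (1 - e) (1 / 2)"
  have a: "0 < a" "a < 1" and f3_neg: "\<And>y. a < y \<Longrightarrow> y < 1 \<Longrightarrow> f3 y < 0"
    using e by (auto simp: a_def)
  obtain M where M: "0 \<le> M" "\<And>y. 0 < y \<Longrightarrow> y \<le> a \<Longrightarrow> f3 y \<le> M"
    using f3_bounded_above[OF a(2)] by blast
  have "eventually (\<lambda>u. f u < - (\<bar>f a\<bar> + \<bar>f1 a\<bar> + \<bar>f2 a\<bar>) - M) (at_left 1)"
    using lim_1 by (simp add: filterlim_at_bot_dense)
  then obtain b where b: "b < 1" "\<And>u. b < u \<Longrightarrow> u < 1 \<Longrightarrow> f u < - (\<bar>f a\<bar> + \<bar>f1 a\<bar> + \<bar>f2 a\<bar>) - M"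
    unfolding eventually_at_left_field by auto
  have J2_neg: "J2 x u < 0" if x: "0 < x" "x < 1" and u: "max a b < u" "u < 1" for x u
  proof (cases "x \<le> a")
    case True
    have "J2 x u \<le> M + (f u - taylor2 u a)"
      using x u True M f3_neg by (intro J2_le_taylor2_remainder) auto
    with b(2)[of u] taylor2_lower_bound[of a u] u a show ?thesis
      by simp
  next
    case False
    with x u a f3_neg show ?thesis
      by (intro J2_neg_above) auto
  qed
  show ?thesis
  proof (intro exI[of _ "1 - max a b"] conjI allI impI)
    show "0 < 1 - max a b"
      using a b by simp
    fix x u :: real
    assume h: "0 < x \<and> x < 1 \<and> 1 - (1 - max a b) < u \<and> u < 1"
    then have "x \<in> {0<..<1}" "u \<in> {0<..<1}"
      using a by auto
    with h J2_neg[of x u] show "deriv (deriv (\<lambda>x. F0 f x u)) x < 0"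
      by (simp add: deriv2_F0)
  qed
qed

section \<open>The logarithmic derivative as \<open>u\<^sub>1 \<rightarrow> 1\<close>\<close>

lemma f_above_tangent:
  assumes p: "0 < p" "p < y" "y < 1" and f2_nonneg: "\<And>t. p < t \<Longrightarrow> t < 1 \<Longrightarrow> 0 \<le> f2 t"
  shows "f p + (y - p) * f1 p \<le> f y"
proof -
  have "f p - p * f1 p \<le> f y - y * f1 p"
  proof (rule DERIV_nonneg_imp_increasing_open[of p y "\<lambda>t. f t - t * f1 p"])
    fix t
    assume t: "p < t" "t < y"
    have "\<exists>d. (f1 has_real_derivative d) (at z) \<and> 0 \<le> d" if "p < z" "z < t" for z
      using DERIV_f1[of z] f2_nonneg[of z] that p t by auto
    moreover have "continuous_on {p..t} f1"
      using p t by (intro continuous_on_subset[OF continuous_on_f1]) auto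
    ultimately have "f1 p \<le> f1 t"
      using t by (intro DERIV_nonneg_imp_increasing_open[of p t f1]) auto
    moreover have "((\<lambda>t. f t - t * f1 p) has_real_derivative f1 t - f1 p) (at t)"
      using p t by (auto intro!: derivative_eq_intros DERIV_f)
    ultimately show "\<exists>d. ((\<lambda>t. f t - t * f1 p) has_real_derivative d) (at t) \<and> 0 \<le> d"
      by auto
  next
    show "continuous_on {p..y} (\<lambda>t. f t - t * f1 p)"
      using p by (intro continuous_intros continuous_on_subset[OF continuous_on_f]) auto
  qed (use p in auto)
  then show ?thesis
    by (simp add: algebra_simps)
qed

lemma f2_neg_somewhere_near_1:
  assumes "0 < a" "a < 1"
  shows "\<exists>y. a < y \<and> y < 1 \<and> f2 y < 0"
proof (rule ccontr)
  assume "\<nexists>y. a < y \<and> y < 1 \<and> f2 y < 0"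
  then have f2_nonneg: "0 \<le> f2 y" if "a < y" "y < 1" for y
    using that by force
  define p where "p = (a + 1) / 2"
  have p: "a < p" "p < 1"
    using assms by (auto simp: p_def)
  have "f p + f1 p \<le> f y" if y: "p < y" "y < 1" for y
  proof -
    have "f1 p \<le> (y - p) * f1 p"
      using deriv_neg[of p] p assms y by (simp add: mult_le_cancel_right1)
    with f_above_tangent[of p y] f2_nonneg p assms y show ?thesis
      by fastforce
  qed
  moreover have "eventually (\<lambda>y. (p < y \<and> y < 1) \<and> f y < f p + f1 p) (at_left (1::real))"
  proof (rule eventually_conj)
    show "eventually (\<lambda>y. p < y \<and> y < 1) (at_left 1)"
      using p unfolding eventually_at_left_field by blast
    show "eventually (\<lambda>y. f y < f p + f1 p) (at_left 1)"
      using lim_1 by (simp add: filterlim_at_bot_dense)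
  qed
  then obtain y where "p < y" "y < 1" "f y < f p + f1 p"
    using eventually_happens[of _ "at_left (1::real)"] by auto
  ultimately show False
    by force
qed

lemma f2_neg_near_1: "\<exists>b<1. \<forall>y. b < y \<and> y < 1 \<longrightarrow> f2 y < 0"
proof -
  obtain e where e: "0 < e" "\<And>y. 1 - e < y \<Longrightarrow> y < 1 \<Longrightarrow> f3 y < 0"
    using deriv3_neg_1 by (auto simp: deriv_iterate_eq)
  define a where "a = max (1 - e) (1 / 2)"
  have a: "0 < a" "a < 1" and f3_neg: "\<And>y. a < y \<Longrightarrow> y < 1 \<Longrightarrow> f3 y < 0"
    using e by (auto simp: a_def)
  obtain y0 where y0: "a < y0" "y0 < 1" "f2 y0 < 0"
    using f2_neg_somewhere_near_1[OF a(1,2)] by blast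
  have "f2 y < f2 y0" if y: "y0 < y" "y < 1" for y
  proof (rule DERIV_neg_imp_decreasing_open[OF y(1)])
    show "\<exists>d. (f2 has_real_derivative d) (at t) \<and> d < 0" if "y0 < t" "t < y" for t
      using DERIV_f2[of t] f3_neg[of t] that y y0 a by auto
    show "continuous_on {y0..y} f2"
      using y y0 a by (intro continuous_on_subset[OF continuous_on_f2]) auto
  qed
  with y0 show ?thesis
    by (intro exI[of _ y0]) force
qed

lemma J_S_tail_bounds:
  assumes xu: "x \<in> {0<..<1}" "u \<in> {0<..<1}" and "0 \<le> C" "0 < e"
    and dichotomy: "\<And>s. s \<in> {0..1} \<Longrightarrow>
      (\<bar>f1 (sq_interp x u s)\<bar> \<le> C \<and> \<bar>f2 (sq_interp x u s)\<bar> \<le> C)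
      \<or> (1 - s \<le> e * s \<and> f2 (sq_interp x u s) < 0)"
  shows "\<bar>J0 x u - S0 x u\<bar> \<le> C + e * (C - S0 x u)"
    and "\<bar>J1 x u - S1 x u\<bar> \<le> C + e * (C - S1 x u)"
proof -
  have "f1 (sq_interp x u s) < 0" if "s \<in> {0..1}" for s
    using deriv_neg sq_interp_in_open_interval[of 0 x 1 u s] xu that by auto
  with dichotomy have f1: "\<bar>f1 (sq_interp x u s)\<bar> \<le> C \<or> (1 - s \<le> e * s \<and> f1 (sq_interp x u s) < 0)"
    if "s \<in> {0..1}" for s
    using that by blast
  have "((\<lambda>s. s * 1 * f1 (sq_interp x u s)) has_integral S0 x u) {0..1}"
    using has_integral_S0[OF xu] by simp
  with f1 \<open>0 \<le> C\<close> \<open>0 < e\<close> show "\<bar>J0 x u - S0 x u\<bar> \<le> C + e * (C - S0 x u)"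
    by (intro has_integral_tail_bound[OF has_integral_J0[OF xu]]) auto
  from dichotomy \<open>0 \<le> C\<close> \<open>0 < e\<close> show "\<bar>J1 x u - S1 x u\<bar> \<le> C + e * (C - S1 x u)"
    by (intro has_integral_tail_bound[OF has_integral_J1[OF xu] has_integral_S1[OF xu]])
      (auto simp: power_le_one)
qed

lemma eventually_tail_dichotomy:
  assumes "0 < k1" "k2 < 1" "0 < e"
  obtains C where "0 \<le> C"
    and "eventually (\<lambda>u. u \<in> {0<..<1} \<and> (\<forall>x\<in>{k1..k2}. \<forall>s\<in>{0..1}.
      (\<bar>f1 (sq_interp x u s)\<bar> \<le> C \<and> \<bar>f2 (sq_interp x u s)\<bar> \<le> C)
      \<or> (1 - s \<le> e * s \<and> f2 (sq_interp x u s) < 0))) (at_left 1)"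
proof -
  obtain b where b: "b < 1" "\<And>y. b < y \<Longrightarrow> y < 1 \<Longrightarrow> f2 y < 0"
    using f2_neg_near_1 by blast
  define c where "c = (1 - k2) / 2"
  define \<eta> where "\<eta> = min (e / (1 + e)) ((1 - b) / 4)"
  have "\<eta> \<le> (1 - b) / 4"
    unfolding \<eta>_def by (rule min.cobounded2)
  then have c: "0 < c" and \<eta>: "0 < \<eta>" "\<eta> \<le> e / (1 + e)" "b + 2 * \<eta> < 1"
    using assms b by (auto simp: c_def \<eta>_def)
  have "{k1..1 - \<eta> * c} \<subseteq> {0<..<1}"
    using assms mult_pos_pos[OF \<eta>(1) c] by auto
  then obtain B1 B2 where "\<And>y. y \<in> {k1..1 - \<eta> * c} \<Longrightarrow> \<bar>f1 y\<bar> \<le> B1"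
    and "\<And>y. y \<in> {k1..1 - \<eta> * c} \<Longrightarrow> \<bar>f2 y\<bar> \<le> B2"
    using continuous_on_compact_abs_le[OF compact_Icc continuous_on_subset[OF continuous_on_f1]]
      continuous_on_compact_abs_le[OF compact_Icc continuous_on_subset[OF continuous_on_f2]]
    by metis
  then have C: "\<And>y. k1 \<le> y \<Longrightarrow> y \<le> 1 - \<eta> * c \<Longrightarrow> \<bar>f1 y\<bar> \<le> \<bar>B1\<bar> + \<bar>B2\<bar> \<and> \<bar>f2 y\<bar> \<le> \<bar>B1\<bar> + \<bar>B2\<bar>"
    by fastforce
  have "eventually (\<lambda>u. max (max ((1 + k2) / 2) (b + 2 * \<eta>)) (1 / 2) < u \<and> u < 1) (at_left 1)"
    unfolding eventually_at_left_field using assms \<eta> by (intro exI[of _ "max (max ((1 + k2) / 2) (b + 2 * \<eta>)) (1 / 2)"]) auto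
  then show ?thesis
  proof (intro that[of "\<bar>B1\<bar> + \<bar>B2\<bar>"], simp, elim eventually_mono, intro conjI ballI)
    fix u :: real
    assume "max (max ((1 + k2) / 2) (b + 2 * \<eta>)) (1 / 2) < u \<and> u < 1"
    then show "u \<in> {0<..<1}"
      using assms by auto
  next
    fix u x s :: real
    assume u: "max (max ((1 + k2) / 2) (b + 2 * \<eta>)) (1 / 2) < u \<and> u < 1" and x: "x \<in> {k1..k2}" and s: "s \<in> {0..1}"
    then have xu: "x \<in> {0<..<1}" "c \<le> u - x" "x < u"
      using assms by (auto simp: c_def)
    have v: "x \<le> sq_interp x u s" "sq_interp x u s < 1"
      using sq_interp_between[of s x u] s xu u by auto
    \<comment> \<open>either the path stays in a compact part of \<open>(0, 1)\<close>, or \<open>s\<close> is so close to 1 that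
      the weight \<open>1 - s\<close> is dominated by \<open>e * s\<close> and the path is where \<open>f2 < 0\<close>\<close>
    from sq_interp_near_end[of s x c u e \<eta>] s xu u c \<eta> \<open>0 < e\<close>
    consider "sq_interp x u s \<le> 1 - \<eta> * c" | "1 - s \<le> e * s" "u - 2 * \<eta> < sq_interp x u s"
      by fastforce
    then show "(\<bar>f1 (sq_interp x u s)\<bar> \<le> \<bar>B1\<bar> + \<bar>B2\<bar> \<and> \<bar>f2 (sq_interp x u s)\<bar> \<le> \<bar>B1\<bar> + \<bar>B2\<bar>)
        \<or> (1 - s \<le> e * s \<and> f2 (sq_interp x u s) < 0)"
    proof cases
      case 1
      then show ?thesis
        using C[of "sq_interp x u s"] v x by auto
    next
      case 2
      then show ?thesis
        using b(2)[of "sq_interp x u s"] u v by auto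
    qed
  qed
qed

lemma eventually_J_S_tail_bounds:
  assumes "0 < k1" "k2 < 1" "0 < e"
  shows "\<exists>C. eventually (\<lambda>u. \<forall>x\<in>{k1..k2}. \<bar>J0 x u - S0 x u\<bar> \<le> C + e * (C - S0 x u)) (at_left 1)"
    and "\<exists>C. eventually (\<lambda>u. \<forall>x\<in>{k1..k2}. \<bar>J1 x u - S1 x u\<bar> \<le> C + e * (C - S1 x u)) (at_left 1)"
proof -
  obtain C where C: "0 \<le> C"
    and ev: "eventually (\<lambda>u. u \<in> {0<..<1} \<and> (\<forall>x\<in>{k1..k2}. \<forall>s\<in>{0..1}.
      (\<bar>f1 (sq_interp x u s)\<bar> \<le> C \<and> \<bar>f2 (sq_interp x u s)\<bar> \<le> C)
      \<or> (1 - s \<le> e * s \<and> f2 (sq_interp x u s) < 0))) (at_left 1)"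
    using eventually_tail_dichotomy[OF assms] .
  have "x \<in> {0<..<1}" if "x \<in> {k1..k2}" for x
    using that assms by auto
  with ev C \<open>0 < e\<close> J_S_tail_bounds[of _ _ C e] show "\<exists>C. eventually (\<lambda>u. \<forall>x\<in>{k1..k2}.
      \<bar>J0 x u - S0 x u\<bar> \<le> C + e * (C - S0 x u)) (at_left 1)"
      "\<exists>C. eventually (\<lambda>u. \<forall>x\<in>{k1..k2}. \<bar>J1 x u - S1 x u\<bar> \<le> C + e * (C - S1 x u)) (at_left 1)"
    by (auto intro!: exI[of _ C] elim!: eventually_mono)
qed

lemma eventually_S0_le:
  assumes "0 < k1" "k2 < 1"
  shows "eventually (\<lambda>u. \<forall>x\<in>{k1..k2}. S0 x u \<le> T) (at_left 1)"
proof -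
  obtain B where B: "\<And>y. y \<in> {k1..k2} \<Longrightarrow> \<bar>f y\<bar> \<le> B"
    using abs_bound_on_Icc[OF continuous_on_f assms] by blast
  have "eventually (\<lambda>u. f u \<le> 2 * T - B) (at_left 1)"
    using lim_1 by (simp add: filterlim_at_bot)
  moreover have "eventually (\<lambda>u. k2 < u \<and> u < 1) (at_left 1)"
    using assms unfolding eventually_at_left_field by blast
  ultimately show ?thesis
  proof eventually_elim
    case (elim u)
    show ?case
    proof
      fix x
      assume x: "x \<in> {k1..k2}"
      then have "S0 x u \<le> - \<bar>f u - f x\<bar> / 2"
        using S0_le_half_diff[of x u] assms elim by auto
      moreover have "f x - f u \<le> \<bar>f u - f x\<bar>" "- B \<le> f x"
        using B[OF x] by (auto simp: abs_le_iff)
      ultimately show "S0 x u \<le> T"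
        using elim by argo
    qed
  qed
qed

lemma eventually_S1_le:
  assumes "0 < k1" "k2 < 1"
  shows "eventually (\<lambda>u. \<forall>x\<in>{k1..k2}. S1 x u \<le> T) (at_left 1)"
proof -
  obtain B where B: "\<And>y. y \<in> {k1..k2} \<Longrightarrow> \<bar>f1 y\<bar> \<le> B"
    using abs_bound_on_Icc[OF continuous_on_f1 assms] by blast
  have "eventually (\<lambda>u. k2 < u \<and> u < 1) (at_left 1)"
    using assms unfolding eventually_at_left_field by blast
  with eventually_S0_le[OF assms, of "min T 0 - B / 2"] show ?thesis
  proof eventually_elim
    case (elim u)
    show ?case
    proof
      fix x
      assume x: "x \<in> {k1..k2}"
      then have xu: "x \<in> {0<..<1}" "u \<in> {0<..<1}" "x < u"
        using assms elim by auto
      have "S0 x u \<le> min T 0 - B / 2" "- f1 x \<le> B"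
        using elim(1) B[OF x] x by (auto simp: abs_le_iff)
      then have num: "2 * S0 x u - f1 x \<le> 2 * min T 0"
        by linarith
      have "S1 x u = (2 * S0 x u - f1 x) / (2 * (u - x))"
        using S1_eq[OF xu(1,2)] xu(3) by simp
      also have "\<dots> \<le> (2 * S0 x u - f1 x) / 2"
        using num xu by (intro divide_left_mono_neg) auto
      also have "\<dots> \<le> T"
        using num min.cobounded1[of T 0] by argo
      finally show "S1 x u \<le> T" .
    qed
  qed
qed

lemma eventually_S1_ratio:
  assumes "0 < k1" "k2 < 1" "0 < e"
  shows "eventually (\<lambda>u. \<forall>x\<in>{k1..k2}. \<bar>S1 x u * (u - x) / S0 x u - 1\<bar> \<le> e) (at_left 1)"
proof -
  obtain B where B: "0 \<le> B" "\<And>y. y \<in> {k1..k2} \<Longrightarrow> \<bar>f1 y\<bar> \<le> B"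
    using abs_bound_on_Icc[OF continuous_on_f1 assms(1,2)] by blast
  have "eventually (\<lambda>u. k2 < u \<and> u < 1) (at_left 1)"
    using assms unfolding eventually_at_left_field by blast
  with eventually_S0_le[OF assms(1,2), of "- (B + 1) / (2 * e)"] show ?thesis
  proof eventually_elim
    case (elim u)
    show ?case
    proof
      fix x
      assume x: "x \<in> {k1..k2}"
      then have xu: "x \<in> {0<..<1}" "u \<in> {0<..<1}" "x < u"
        using assms elim by auto
      have "S0 x u \<le> - (B + 1) / (2 * e)"
        using elim(1) x by auto
      then have "B + 1 \<le> 2 * (e * - S0 x u)"
        using \<open>0 < e\<close> by (simp add: field_simps)
      then have "0 < e * - S0 x u" "\<bar>f1 x\<bar> / 2 \<le> e * - S0 x u"
        using B(1) B(2)[OF x] by argo+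
      moreover have "S0 x u < 0"
        using calculation(1) \<open>0 < e\<close> by (simp add: mult_less_0_iff)
      ultimately have "S0 x u < 0" "\<bar>f1 x\<bar> / 2 \<le> e * \<bar>S0 x u\<bar>"
        by simp_all
      moreover have "S1 x u * (u - x) - S0 x u = - f1 x / 2"
        using S1_eq[OF xu(1,2)] xu(3) by (simp add: field_simps)
      ultimately show "\<bar>S1 x u * (u - x) / S0 x u - 1\<bar> \<le> e"
        by (intro relative_error_div) auto
    qed
  qed
qed


lemma eventually_J1_J0_ratio:
  assumes "0 < k1" "k2 < 1" "0 < e" "e \<le> 1 / 6"
  shows "eventually (\<lambda>u. \<forall>x\<in>{k1..k2}. \<bar>J1 x u * (u - x) / J0 x u - 1\<bar> \<le> 4 * e) (at_left 1)"
proof -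
  have J0_rel: "eventually (\<lambda>u. \<forall>x\<in>{k1..k2}. \<bar>J0 x u - S0 x u\<bar> \<le> e * \<bar>S0 x u\<bar>) (at_left 1)"
    by (rule eventually_relative_error[where J = "\<lambda>u x. J0 x u" and S = "\<lambda>u x. S0 x u",
          OF eventually_J_S_tail_bounds(1)[OF assms(1,2)] eventually_S0_le[OF assms(1,2)] \<open>0 < e\<close>])
  have J1_rel: "eventually (\<lambda>u. \<forall>x\<in>{k1..k2}. \<bar>J1 x u - S1 x u\<bar> \<le> e * \<bar>S1 x u\<bar>) (at_left 1)"
    by (rule eventually_relative_error[where J = "\<lambda>u x. J1 x u" and S = "\<lambda>u x. S1 x u",
          OF eventually_J_S_tail_bounds(2)[OF assms(1,2)] eventually_S1_le[OF assms(1,2)] \<open>0 < e\<close>])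
  have neg: "eventually (\<lambda>u. \<forall>x\<in>{k1..k2}. S0 x u < 0 \<and> S1 x u < 0) (at_left 1)"
    using eventually_conj[OF eventually_S0_le[OF assms(1,2), of "- 1"] eventually_S1_le[OF assms(1,2), of "- 1"]]
    by (rule eventually_mono) fastforce
  from J0_rel J1_rel neg eventually_S1_ratio[OF assms(1-3)] show ?thesis
  proof eventually_elim
    case (elim u)
    show ?case
    proof
      fix x
      assume x: "x \<in> {k1..k2}"
      note elim_x = elim[THEN bspec, OF x]
      have "S0 x u \<noteq> 0" "S1 x u \<noteq> 0"
        using elim_x(3) by simp_all
      note p = relative_error_div[OF elim_x(2) \<open>S1 x u \<noteq> 0\<close>]
        and q = elim_x(4)
        and r = relative_error_div[OF elim_x(1) \<open>S0 x u \<noteq> 0\<close>]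
      have "J0 x u \<noteq> 0"
      proof
        assume "J0 x u = 0"
        with r \<open>e \<le> 1 / 6\<close> show False
          by simp
      qed
      then have "J1 x u * (u - x) / J0 x u
          = (J1 x u / S1 x u) * (S1 x u * (u - x) / S0 x u) / (J0 x u / S0 x u)"
        using \<open>S0 x u \<noteq> 0\<close> \<open>S1 x u \<noteq> 0\<close> by (simp add: field_simps)
      then show "\<bar>J1 x u * (u - x) / J0 x u - 1\<bar> \<le> 4 * e"
        using relative_error_mult_div[OF p q r \<open>e \<le> 1 / 6\<close>] by (simp only:)
    qed
  qed
qed

lemma F0_ratio_uniform_limit:
  assumes "compact K" "K \<subseteq> {0<..<1}"
  shows "uniform_limit K (\<lambda>u \<xi>. deriv (\<lambda>x. F0 f x u) \<xi> / F0 f \<xi> u) (\<lambda>\<xi>. 1 / (1 - \<xi>)) (at_left 1)"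
proof -
  obtain k1 k2 where k: "0 < k1" "k2 < 1" "K \<subseteq> {k1..k2}"
    using compact_subset_Icc_in_open_interval[OF assms] by auto
  define c where "c = (1 - k2) / 2"
  have "0 < c"
    using k by (simp add: c_def)
  show ?thesis
    unfolding uniform_limit_iff
  proof (intro allI impI)
    fix \<epsilon> :: real
    assume "0 < \<epsilon>"
    define e where "e = min (1 / 6) (\<epsilon> * c / 8)"
    have e: "0 < e" "e \<le> 1 / 6" "4 * e / c \<le> \<epsilon> / 2"
      using \<open>0 < \<epsilon>\<close> \<open>0 < c\<close> by (auto simp: e_def field_simps)
    have "eventually (\<lambda>u. max ((1 + k2) / 2) (1 - \<epsilon> * c\<^sup>2 / 2) < u \<and> u < 1) (at_left 1)"
      unfolding eventually_at_left_field using k \<open>0 < \<epsilon>\<close> \<open>0 < c\<close>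
      by (intro exI[of _ "max ((1 + k2) / 2) (1 - \<epsilon> * c\<^sup>2 / 2)"]) auto
    with eventually_J1_J0_ratio[OF k(1,2) e(1,2)]
    show "eventually (\<lambda>u. \<forall>\<xi>\<in>K. dist (deriv (\<lambda>x. F0 f x u) \<xi> / F0 f \<xi> u) (1 / (1 - \<xi>)) < \<epsilon>) (at_left 1)"
    proof eventually_elim
      case (elim u)
      show ?case
      proof
        fix x
        assume "x \<in> K"
        then have x: "x \<in> {k1..k2}" "x \<in> {0<..<1}"
          using k assms(2) by auto
        have u: "u \<in> {0<..<1}" "(1 - u) / c\<^sup>2 < \<epsilon> / 2" "c \<le> u - x"
          using elim x k \<open>0 < c\<close> by (auto simp: c_def field_simps)
        have "\<bar>J1 x u / J0 x u - 1 / (1 - x)\<bar> \<le> 4 * e / c + (1 - u) / c\<^sup>2"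
          using elim x u \<open>0 < c\<close> by (intro ratio_to_inverse_estimate) auto
        with e(3) u(2) have "\<bar>J1 x u / J0 x u - 1 / (1 - x)\<bar> < \<epsilon>"
          by linarith
        then show "dist (deriv (\<lambda>x. F0 f x u) x / F0 f x u) (1 / (1 - x)) < \<epsilon>"
          using deriv_F0[OF x(2) u(1)] F0_eq_J0[OF x(2) u(1)] by (simp add: dist_real_def)
      qed
    qed
  qed
qed

end

theorem lemma4p1:
  fixes f u0 :: "real \<Rightarrow> real"
  assumes u0_smooth: "smooth_on UNIV u0"
    and u0_decr: "\<And>x y. x < y \<Longrightarrow> u0 y < u0 x"
    and u0_range: "\<And>x. 0 < u0 x \<and> u0 x < 1"
    and u0_bot: "(u0 \<longlongrightarrow> 1) at_bot"
    and u0_top: "(u0 \<longlongrightarrow> 0) at_top"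
    and f_u0: "\<And>x. f (u0 x) = x"
    and u0_f: "\<And>u. 0 < u \<Longrightarrow> u < 1 \<Longrightarrow> u0 (f u) = u"
    and f_smooth: "smooth_on {0<..<1} f"
    and f'_neg: "\<And>u. 0 < u \<Longrightarrow> u < 1 \<Longrightarrow> deriv f u < 0"
    and f_lim0: "filterlim f at_top (at_right 0)"
    and f_lim1: "filterlim f at_bot (at_left 1)"
    and f'''_neg0: "\<exists>\<epsilon>>0. \<forall>u. 0 < u \<and> u < \<epsilon> \<longrightarrow> (deriv ^^ 3) f u < 0"
    and f'''_neg1: "\<exists>\<epsilon>>0. \<forall>u. 1 - \<epsilon> < u \<and> u < 1 \<longrightarrow> (deriv ^^ 3) f u < 0"
  shows "(\<forall>u\<^sub>1. 0 < u\<^sub>1 \<and> u\<^sub>1 < 1 \<longrightarrow>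
            filterlim (\<lambda>\<xi>. F0 f \<xi> u\<^sub>1) at_bot (at_right 0) \<and>
            filterlim (\<lambda>\<xi>. F0 f \<xi> u\<^sub>1) at_bot (at_left 1))
       \<and> (\<exists>\<delta>>0. \<forall>\<xi> u\<^sub>1. 0 < \<xi> \<and> \<xi> < 1 \<and> 1 - \<delta> < u\<^sub>1 \<and> u\<^sub>1 < 1 \<longrightarrow>
            deriv (deriv (\<lambda>x. F0 f x u\<^sub>1)) \<xi> < 0)
       \<and> (\<forall>K. compact K \<and> K \<subseteq> {0<..<1} \<longrightarrow>
            uniform_limit K
              (\<lambda>u\<^sub>1 \<xi>. deriv (\<lambda>x. F0 f x u\<^sub>1) \<xi> / F0 f \<xi> u\<^sub>1)
              (\<lambda>\<xi>. 1 / (1 - \<xi>)) (at_left 1))"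
proof -
  interpret inverse_profile f
    using f_smooth f'_neg f_lim0 f_lim1 f'''_neg0 f'''_neg1 by unfold_locales
  have "filterlim (\<lambda>\<xi>. F0 f \<xi> u\<^sub>1) at_bot (at_right 0) \<and> filterlim (\<lambda>\<xi>. F0 f \<xi> u\<^sub>1) at_bot (at_left 1)"
    if "0 < u\<^sub>1 \<and> u\<^sub>1 < 1" for u\<^sub>1
    using F0_tendsto_at_bot_0[of u\<^sub>1] F0_tendsto_at_bot_1[of u\<^sub>1] that by simp
  then show ?thesis
    using deriv2_F0_neg_near_1 F0_ratio_uniform_limit by blast
qed

end
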